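(* Let $X$ be a finite topological space and $A\subseteq X$. Then $\Psi(a,A)=\Psi(a,\overline{A})$ for all $a\in X$, where $\overline{A}$ is the closure of $A$ in $X$.
   Context: For a finite topological space $X$ and $x\in X$, $U_x$ denotes the minimal open set containing $x$. A nested sequence of open sets around $x$ is a finite sequence $U_0\subsetneq U_1\subsetneq\cdots\subsetneq U_m=X$ of open sets with $U_0=U_x$ such that for each $j$ there is no open set $V$ with $U_j\subsetneq V\subsetneq U_{j+1}$. The furtherness function $\Psi:X\times X\to\{0,1,\dots,|X|-1\}$ is defined by: $\Psi(x,y)$ is the smallest integer $k\ge 0$ such that there exists a nested sequence $(U_j)_{j\ge0}$ of open sets around $x$ with $y\in U_k$. For $a\in X$ and $B\subseteq X$, $\Psi(a,B)=\min_{b\in B}\Psi(a,b)$, with $\Psi(a,\emptyset)=\infty$. *)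

theory Defs
  imports "HOL-Analysis.Analysis" "HOL-Library.Extended_Nat"
begin

definition min_open :: "'a topology \<Rightarrow> 'a \<Rightarrow> 'a set" where
  "min_open T x = \<Inter> {U. openin T U \<and> x \<in> U}"

definition nested_seq :: "'a topology \<Rightarrow> 'a \<Rightarrow> (nat \<Rightarrow> 'a set) \<Rightarrow> nat \<Rightarrow> bool" where
  "nested_seq T x U m \<longleftrightarrow>
     U 0 = min_open T x \<and> U m = topspace T \<and>
     (\<forall>j\<le>m. openin T (U j)) \<and>
     (\<forall>j<m. U j \<subset> U (Suc j) \<and>
        \<not> (\<exists>V. openin T V \<and> U j \<subset> V \<and> V \<subset> U (Suc j)))"

definition furtherness :: "'a topology \<Rightarrow> 'a \<Rightarrow> 'a \<Rightarrow> nat" where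
  "furtherness T x y = (LEAST k. \<exists>U m. nested_seq T x U m \<and> k \<le> m \<and> y \<in> U k)"

text \<open>Furtherness to a set; infinity for the empty set.\<close>
definition furtherness_set :: "'a topology \<Rightarrow> 'a \<Rightarrow> 'a set \<Rightarrow> enat" where
  "furtherness_set T a B = (INF b\<in>B. enat (furtherness T a b))"

end

theory Submission
  imports Defs
begin

text \<open>The members of a nested sequence are open. So if b lies in the closure of A and
  U k is a term of a nested sequence around a containing b with k = \<Psi>(a,b), then U k also
  meets A, and the same sequence shows \<Psi>(a,c) \<le> k for a point c of A. Hence every value of
  \<Psi>(a,-) on the closure is dominated by one on A, and the two infima agree.\<close>

lemma furtherness_le:
  assumes "nested_seq T x U m" and "k \<le> m" and "y \<in> U k"
  shows "furtherness T x y \<le> k"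
  unfolding furtherness_def using assms by (blast intro: Least_le)

lemma furtherness_attained:
  assumes "nested_seq T x U m" and "y \<in> topspace T"
  obtains V n where "nested_seq T x V n" and "furtherness T x y \<le> n"
    and "y \<in> V (furtherness T x y)"
proof -
  let ?P = "\<lambda>k. \<exists>V n. nested_seq T x V n \<and> k \<le> n \<and> y \<in> V k"
  have "?P m"
    using assms unfolding nested_seq_def by auto
  then have "?P (furtherness T x y)"
    unfolding furtherness_def by (rule LeastI)
  then show thesis
    using that by blast
qed

text \<open>Without any nested sequence around x, \<open>furtherness T x\<close> is the junk value
  \<open>LEAST k. False\<close> everywhere.\<close>

lemma furtherness_const_if_no_nested_seq:
  assumes "\<nexists>U m. nested_seq T x U m"
  shows "furtherness T x y = furtherness T x z"
  using assms unfolding furtherness_def by simp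

lemma closure_of_furtherness_dominated:
  assumes "b \<in> T closure_of A"
  shows "\<exists>c\<in>A. furtherness T x c \<le> furtherness T x b"
proof (cases "\<exists>U m. nested_seq T x U m")
  case True
  then obtain U m where "nested_seq T x U m"
    by blast
  moreover have "b \<in> topspace T"
    using assms by (simp add: in_closure_of)
  ultimately obtain V n where V: "nested_seq T x V n" "furtherness T x b \<le> n"
    and b_in: "b \<in> V (furtherness T x b)"
    by (rule furtherness_attained)
  have "openin T (V (furtherness T x b))"
    using V unfolding nested_seq_def by auto
  then obtain c where c: "c \<in> A" "c \<in> V (furtherness T x b)"
    using assms b_in unfolding in_closure_of by blast
  have "furtherness T x c \<le> furtherness T x b"
    using V c(2) by (rule furtherness_le)
  with c(1) show ?thesis ..
next
  case False
  have "A \<noteq> {}"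
    using assms by (metis closure_of_empty empty_iff)
  then obtain c where c: "c \<in> A"
    by blast
  have "furtherness T x c \<le> furtherness T x b"
    by (rule eq_refl[OF furtherness_const_if_no_nested_seq[OF False]])
  with c show ?thesis ..
qed

lemma furtherness_set_closure_of:
  assumes "A \<subseteq> topspace T"
  shows "furtherness_set T x A = furtherness_set T x (T closure_of A)"
  unfolding furtherness_set_def
proof (rule antisym)
  show "(INF c\<in>A. enat (furtherness T x c)) \<le> (INF b\<in>T closure_of A. enat (furtherness T x b))"
  proof (rule INF_mono)
    fix b
    assume "b \<in> T closure_of A"
    then show "\<exists>c\<in>A. enat (furtherness T x c) \<le> enat (furtherness T x b)"
      unfolding enat_ord_simps(1) by (rule closure_of_furtherness_dominated)
  qed
  show "(INF b\<in>T closure_of A. enat (furtherness T x b)) \<le> (INF c\<in>A. enat (furtherness T x c))"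
    by (rule INF_superset_mono[OF closure_of_subset[OF assms] order_refl])
qed

theorem mainTheorem17:
  fixes T :: "'a topology" and A :: "'a set" and a :: 'a
  assumes "finite (topspace T)" and "A \<subseteq> topspace T" and "a \<in> topspace T"
  shows "furtherness_set T a A = furtherness_set T a (T closure_of A)"
  using assms(2) by (rule furtherness_set_closure_of)

end
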